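(* Let $\Phi:(\mathcal{S},g)\to(\mathcal{M},\bar g)$ be an isometric immersion of an $n$-dimensional orientable Riemannian manifold into a semi-Riemannian manifold with co-dimension $k$. For every $p\in\mathcal{S}$, the umbilical space and the shear space at $p$ satisfy $$\mathscr{U}_p=(\mathrm{Im}\,\widetilde h_p)^\perp\quad\text{and}\quad k-\dim\mathscr{U}_p=\dim\mathrm{Im}\,\widetilde h_p,$$ where $(\mathrm{Im}\,\widetilde h_p)^\perp=\{\eta_p\in T_p\mathcal{S}^\perp:\bar g(\eta_p,\xi_p)=0\ \forall\xi_p\in\mathrm{Im}\,\widetilde h_p\}$.
   Context: $g=\Phi^\star\bar g$ is positive definite. The second fundamental form $h$ is the normal part of $\overline\nabla_XY$; the shape operator $A_\xi$ of a normal vector $\xi$ satisfies $g(A_\xi X,Y)=\bar g(h(X,Y),\xi)$; $H=\frac1n\mathrm{tr}_g h$ is the mean curvature vector. The total shear tensor is $\widetilde h(X,Y)=h(X,Y)-g(X,Y)H$. The shear space at $p$ is $\mathrm{Im}\,\widetilde h_p=\mathrm{span}\{\widetilde h(v,w):v,w\in T_p\mathcal{S}\}\subseteq T_p\mathcal{S}^\perp$. The umbilical space at $p$ is $\mathscr{U}_p=\{\xi_p\in T_p\mathcal{S}^\perp: A_{\xi_p}\text{ is proportional to the identity}\}$. *)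

theory Defs
  imports "HOL-Analysis.Analysis"
begin

text \<open>Pointwise model at a fixed point p: T_pS = real^'n (dimension n = CARD('n)),
  with an arbitrary positive definite inner product g; T_pS^perp = real^'k
  (codimension k = CARD('k)) with the restriction gb of the ambient semi-Riemannian
  metric, which is symmetric, bilinear and nondegenerate (possibly indefinite).
  The second fundamental form at p is a symmetric bilinear map h : T x T -> N.\<close>

definition pos_def_form :: "('a::real_vector \<Rightarrow> 'a \<Rightarrow> real) \<Rightarrow> bool" where
  "pos_def_form g \<longleftrightarrow> bilinear g \<and> (\<forall>x y. g x y = g y x) \<and> (\<forall>x. x \<noteq> 0 \<longrightarrow> g x x > 0)"

definition nondeg_form :: "('a::real_vector \<Rightarrow> 'a \<Rightarrow> real) \<Rightarrow> bool" where
  "nondeg_form gb \<longleftrightarrow> bilinear gb \<and> (\<forall>x y. gb x y = gb y x) \<and> (\<forall>x. (\<forall>y. gb x y = 0) \<longrightarrow> x = 0)"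

definition gram_matrix :: "(real^'n \<Rightarrow> real^'n \<Rightarrow> real) \<Rightarrow> real^'n^'n" where
  "gram_matrix g = (\<chi> i j. g (axis i 1) (axis j 1))"

definition mean_curv ::
  "(real^'n \<Rightarrow> real^'n \<Rightarrow> real) \<Rightarrow> (real^'n \<Rightarrow> real^'n \<Rightarrow> 'b::real_vector) \<Rightarrow> 'b" where
  "mean_curv g h = (1 / real CARD('n)) *\<^sub>R
     (\<Sum>i\<in>UNIV. \<Sum>j\<in>UNIV. (matrix_inv (gram_matrix g) $ i $ j) *\<^sub>R h (axis i 1) (axis j 1))"

definition total_shear ::
  "(real^'n \<Rightarrow> real^'n \<Rightarrow> real) \<Rightarrow> (real^'n \<Rightarrow> real^'n \<Rightarrow> 'b::real_vector) \<Rightarrow> real^'n \<Rightarrow> real^'n \<Rightarrow> 'b" where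
  "total_shear g h X Y = h X Y - g X Y *\<^sub>R mean_curv g h"

definition shear_space ::
  "(real^'n \<Rightarrow> real^'n \<Rightarrow> real) \<Rightarrow> (real^'n \<Rightarrow> real^'n \<Rightarrow> 'b::real_vector) \<Rightarrow> 'b set" where
  "shear_space g h = span {total_shear g h v w | v w. True}"

definition shape_op ::
  "(real^'n \<Rightarrow> real^'n \<Rightarrow> real) \<Rightarrow> ('b \<Rightarrow> 'b \<Rightarrow> real) \<Rightarrow> (real^'n \<Rightarrow> real^'n \<Rightarrow> 'b) \<Rightarrow> 'b
     \<Rightarrow> (real^'n \<Rightarrow> real^'n)" where
  "shape_op g gb h \<xi> = (SOME A. linear A \<and> (\<forall>X Y. g (A X) Y = gb (h X Y) \<xi>))"

definition umbilical_space ::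
  "(real^'n \<Rightarrow> real^'n \<Rightarrow> real) \<Rightarrow> ('b \<Rightarrow> 'b \<Rightarrow> real) \<Rightarrow> (real^'n \<Rightarrow> real^'n \<Rightarrow> 'b) \<Rightarrow> 'b set" where
  "umbilical_space g gb h = {\<xi>. \<exists>c::real. shape_op g gb h \<xi> = (\<lambda>X. c *\<^sub>R X)}"

definition orth_compl :: "('b \<Rightarrow> 'b \<Rightarrow> real) \<Rightarrow> 'b set \<Rightarrow> 'b set" where
  "orth_compl gb V = {\<eta>. \<forall>\<xi>\<in>V. gb \<eta> \<xi> = 0}"

end

theory Submission
  imports Defs
begin

text \<open>For a normal vector \<open>\<xi>\<close>, \<open>A\<^sub>\<xi> = c \<cdot> id\<close> means \<open>gb (h X Y) \<xi> = c \<cdot> g X Y\<close> for all \<open>X, Y\<close>;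
  taking the \<open>g\<close>-trace forces \<open>c = gb H \<xi>\<close>, so this says exactly that \<open>\<xi>\<close> is
  \<open>gb\<close>-orthogonal to every value of the total shear tensor, i.e. to the shear space.
  The dimension formula is \<open>dim W\<^sup>\<bottom> + dim W = k\<close> for a nondegenerate, possibly
  indefinite form: the Gram matrix of \<open>gb\<close> is invertible and carries the
  \<open>gb\<close>-orthogonal complement onto the Euclidean one.\<close>

lemma linear_eq_sum_axis:
  fixes f :: "real^'n \<Rightarrow> 'b::real_vector"
  assumes "linear f"
  shows "f v = (\<Sum>i\<in>UNIV. v$i *\<^sub>R f (axis i 1))"
proof -
  have "f v = f (\<Sum>i\<in>UNIV. v$i *\<^sub>R axis i 1)"
    using basis_expansion[of v] by (simp add: scalar_mult_eq_scaleR)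
  also have "\<dots> = (\<Sum>i\<in>UNIV. v$i *\<^sub>R f (axis i 1))"
    using assms by (simp add: linear_sum linear_scale)
  finally show ?thesis .
qed

lemma linear_vec_lambda:
  assumes "\<And>j. linear (\<lambda>x. f x j)"
  shows "linear (\<lambda>x. \<chi> j. f x j)"
  by (rule linearI) (simp_all add: vec_eq_iff linear_add[OF assms] linear_scale[OF assms])

lemma bilinear_eq_inner_gram_matrix:
  fixes g :: "real^'n \<Rightarrow> real^'n \<Rightarrow> real"
  assumes "bilinear g"
  shows "g x y = x \<bullet> (gram_matrix g *v y)"
proof -
  have lx: "linear (\<lambda>x. g x y)" and ly: "linear (g x)" for x y
    using assms by (simp_all add: bilinear_def)
  have "g u y = (\<Sum>j\<in>UNIV. g u (axis j 1) * y$j)" for u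
    using linear_eq_sum_axis[OF ly[of u], of y] by (simp add: mult.commute)
  moreover have "g x y = (\<Sum>i\<in>UNIV. x$i * g (axis i 1) y)"
    using linear_eq_sum_axis[OF lx, of x] by simp
  ultimately show ?thesis
    by (simp only: inner_vec_def matrix_vector_mult_def gram_matrix_def vec_lambda_beta inner_real_def)
qed

lemma pos_def_form_imp_nondeg_form: "pos_def_form g \<Longrightarrow> nondeg_form g"
  unfolding pos_def_form_def nondeg_form_def by (metis less_irrefl)

lemma nondeg_form_eq_inner_gram_matrix:
  fixes g :: "real^'n \<Rightarrow> real^'n \<Rightarrow> real"
  assumes "nondeg_form g"
  shows "g x y = (gram_matrix g *v x) \<bullet> y"
  using assms bilinear_eq_inner_gram_matrix[of g y x]
  by (simp add: nondeg_form_def inner_commute)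

lemma nondeg_form_gram_matrix_inverse:
  fixes g :: "real^'n \<Rightarrow> real^'n \<Rightarrow> real"
  assumes "nondeg_form g"
  shows "gram_matrix g ** matrix_inv (gram_matrix g) = mat 1"
    and "matrix_inv (gram_matrix g) ** gram_matrix g = mat 1"
proof -
  have "\<exists>B. B ** gram_matrix g = mat 1"
    unfolding matrix_left_invertible_ker
  proof (intro allI impI)
    fix x assume "gram_matrix g *v x = 0"
    then have "\<forall>y. g x y = 0"
      using nondeg_form_eq_inner_gram_matrix[OF assms] by simp
    then show "x = 0"
      using assms by (simp add: nondeg_form_def)
  qed
  then have "\<exists>A. gram_matrix g ** A = mat 1 \<and> A ** gram_matrix g = mat 1"
    by (simp only: invertible_left_inverse[symmetric] invertible_def)
  then have "gram_matrix g ** matrix_inv (gram_matrix g) = mat 1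
      \<and> matrix_inv (gram_matrix g) ** gram_matrix g = mat 1"
    unfolding matrix_inv_def by (rule someI_ex)
  then show "gram_matrix g ** matrix_inv (gram_matrix g) = mat 1"
    and "matrix_inv (gram_matrix g) ** gram_matrix g = mat 1"
    by simp_all
qed

lemma nondeg_form_represents_linear:
  fixes g :: "real^'n \<Rightarrow> real^'n \<Rightarrow> real"
  assumes "nondeg_form g" and "linear f"
  shows "f y = g (matrix_inv (gram_matrix g) *v (\<chi> j. f (axis j 1))) y"
proof -
  have "g (matrix_inv (gram_matrix g) *v (\<chi> j. f (axis j 1))) y = (\<chi> j. f (axis j 1)) \<bullet> y"
    using nondeg_form_gram_matrix_inverse(1)[OF assms(1)]
    by (simp add: nondeg_form_eq_inner_gram_matrix[OF assms(1)] matrix_vector_mul_assoc)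
  also have "\<dots> = f y"
    using linear_eq_sum_axis[OF assms(2), of y] by (simp add: inner_vec_def mult.commute)
  finally show ?thesis ..
qed

lemma shape_op_spec:
  fixes h :: "real^'n \<Rightarrow> real^'n \<Rightarrow> 'b::real_vector"
  assumes "nondeg_form g" and "bilinear gb" and "bilinear h"
  shows "linear (shape_op g gb h \<xi>) \<and> (\<forall>X Y. g (shape_op g gb h \<xi> X) Y = gb (h X Y) \<xi>)"
proof -
  define F where "F X = (\<chi> j. gb (h X (axis j 1)) \<xi>)" for X
  have lin_gb: "linear (\<lambda>z. gb z \<xi>)" and lin_h1: "linear (\<lambda>X. h X Y)" and lin_h2: "linear (h X)"
    for X Y using assms(2,3) by (simp_all add: bilinear_def)
  have "linear F"
    unfolding F_def
    by (rule linear_vec_lambda) (use linear_compose[OF lin_h1 lin_gb] in \<open>simp add: o_def\<close>)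
  then have "linear (\<lambda>X. matrix_inv (gram_matrix g) *v F X)"
    using linear_compose[OF _ matrix_vector_mul_linear] by (auto simp: o_def)
  moreover have "g (matrix_inv (gram_matrix g) *v F X) Y = gb (h X Y) \<xi>" for X Y
    using nondeg_form_represents_linear[OF assms(1), of "\<lambda>Y. gb (h X Y) \<xi>" Y]
      linear_compose[OF lin_h2 lin_gb]
    by (simp add: F_def o_def)
  ultimately have "\<exists>A. linear A \<and> (\<forall>X Y. g (A X) Y = gb (h X Y) \<xi>)"
    by blast
  then show ?thesis
    unfolding shape_op_def by (rule someI_ex)
qed

lemma shape_op_eqI:
  fixes h :: "real^'n \<Rightarrow> real^'n \<Rightarrow> 'b::real_vector"
  assumes "nondeg_form g" and "bilinear gb" and "bilinear h"
    and "\<And>X Y. g (A X) Y = gb (h X Y) \<xi>"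
  shows "shape_op g gb h \<xi> = A"
proof
  fix X
  have "g (shape_op g gb h \<xi> X - A X) Y = 0" for Y
    using shape_op_spec[OF assms(1-3)] assms(1,4)
    by (simp add: nondeg_form_def bilinear_def linear_diff)
  then show "shape_op g gb h \<xi> X = A X"
    using assms(1) unfolding nondeg_form_def by (metis eq_iff_diff_eq_0)
qed

lemma umbilical_space_iff:
  fixes h :: "real^'n \<Rightarrow> real^'n \<Rightarrow> 'b::real_vector"
  assumes "nondeg_form g" and "bilinear gb" and "bilinear h"
  shows "\<xi> \<in> umbilical_space g gb h \<longleftrightarrow> (\<exists>c. \<forall>X Y. gb (h X Y) \<xi> = c * g X Y)"
proof -
  have g_scale: "g (c *\<^sub>R X) Y = c * g X Y" for c X Y
    using assms(1) by (simp add: nondeg_form_def bilinear_def linear_scale)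
  show ?thesis
  proof
    assume "\<xi> \<in> umbilical_space g gb h"
    then obtain c where "shape_op g gb h \<xi> = (\<lambda>X. c *\<^sub>R X)"
      unfolding umbilical_space_def by blast
    then show "\<exists>c. \<forall>X Y. gb (h X Y) \<xi> = c * g X Y"
      using shape_op_spec[OF assms, of \<xi>] g_scale by metis
  next
    assume "\<exists>c. \<forall>X Y. gb (h X Y) \<xi> = c * g X Y"
    then obtain c where "\<And>X Y. g (c *\<^sub>R X) Y = gb (h X Y) \<xi>"
      using g_scale by metis
    then show "\<xi> \<in> umbilical_space g gb h"
      unfolding umbilical_space_def using shape_op_eqI[OF assms] by blast
  qed
qed

lemma linear_mean_curv_eq_factor:
  fixes h :: "real^'n \<Rightarrow> real^'n \<Rightarrow> 'b::real_vector"
  assumes "nondeg_form g" and "linear L" and "\<And>X Y. L (h X Y) = c * g X Y"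
  shows "L (mean_curv g h) = c"
proof -
  define M where "M = matrix_inv (gram_matrix g)"
  have Lh: "L (h (axis i 1) (axis j 1)) = c * gram_matrix g $ j $ i" for i j
    using assms(1,3) by (simp add: gram_matrix_def nondeg_form_def)
  have "L (mean_curv g h) = (1 / real CARD('n)) *
      (\<Sum>i\<in>UNIV. \<Sum>j\<in>UNIV. M $ i $ j * L (h (axis i 1) (axis j 1)))"
    unfolding mean_curv_def M_def by (simp add: linear_scale[OF assms(2)] linear_sum[OF assms(2)])
  also have "\<dots> = (1 / real CARD('n)) * (c * (\<Sum>i\<in>UNIV. (M ** gram_matrix g) $ i $ i))"
    by (simp add: Lh matrix_matrix_mult_def sum_distrib_left ac_simps)
  also have "\<dots> = c"
    using nondeg_form_gram_matrix_inverse(2)[OF assms(1)] by (simp add: M_def mat_def)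
  finally show ?thesis .
qed

lemma orth_compl_span:
  assumes "bilinear gb"
  shows "orth_compl gb (span S) = orth_compl gb S"
proof
  show "orth_compl gb (span S) \<subseteq> orth_compl gb S"
    unfolding orth_compl_def using span_base by blast
  show "orth_compl gb S \<subseteq> orth_compl gb (span S)"
  proof
    fix \<eta> assume "\<eta> \<in> orth_compl gb S"
    then have "S \<subseteq> {\<xi>. gb \<eta> \<xi> = 0}"
      unfolding orth_compl_def by blast
    moreover have "subspace {\<xi>. gb \<eta> \<xi> = 0}"
      using assms by (simp add: bilinear_def linear_subspace_kernel)
    ultimately have "span S \<subseteq> {\<xi>. gb \<eta> \<xi> = 0}"
      by (rule span_minimal)
    then show "\<eta> \<in> orth_compl gb (span S)"
      unfolding orth_compl_def by blast
  qed
qed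

lemma dim_orth_compl:
  fixes gb :: "real^'k \<Rightarrow> real^'k \<Rightarrow> real"
  assumes "nondeg_form gb" and "subspace W"
  shows "dim (orth_compl gb W) + dim W = CARD('k)"
proof -
  define B where "B = gram_matrix gb"
  define P where "P = {y. \<forall>x\<in>W. orthogonal x y}"
  have BB': "B ** matrix_inv B = mat 1" and B'B: "matrix_inv B ** B = mat 1"
    using nondeg_form_gram_matrix_inverse[OF assms(1)] by (simp_all add: B_def)
  have orth_iff: "\<eta> \<in> orth_compl gb W \<longleftrightarrow> B *v \<eta> \<in> P" for \<eta>
    by (simp add: orth_compl_def P_def orthogonal_def inner_commute B_def
        nondeg_form_eq_inner_gram_matrix[OF assms(1)])
  have "orth_compl gb W = (\<lambda>y. matrix_inv B *v y) ` P"
  proof (rule set_eqI)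
    fix \<eta>
    show "\<eta> \<in> orth_compl gb W \<longleftrightarrow> \<eta> \<in> (\<lambda>y. matrix_inv B *v y) ` P"
      unfolding orth_iff
    proof
      assume "B *v \<eta> \<in> P"
      moreover have "\<eta> = matrix_inv B *v (B *v \<eta>)"
        using B'B by (simp add: matrix_vector_mul_assoc)
      ultimately show "\<eta> \<in> (\<lambda>y. matrix_inv B *v y) ` P"
        by (rule rev_image_eqI)
    next
      assume "\<eta> \<in> (\<lambda>y. matrix_inv B *v y) ` P"
      then show "B *v \<eta> \<in> P"
        using BB' by (auto simp: matrix_vector_mul_assoc)
    qed
  qed
  moreover have "inj (\<lambda>y. matrix_inv B *v y)"
    using BB' matrix_left_invertible_injective by blast
  ultimately have "dim (orth_compl gb W) = dim P"
    using dim_image_eq[OF matrix_vector_mul_linear, of "matrix_inv B" P]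
    by (metis inj_on_subset subset_UNIV)
  moreover have "dim P + dim W = dim (UNIV :: (real^'k) set)"
    using dim_subspace_orthogonal_to_vectors[OF assms(2) subspace_UNIV subset_UNIV]
    by (simp add: P_def)
  ultimately show ?thesis
    by (simp add: dim_UNIV DIM_cart)
qed

lemma umbilical_space_eq_orth_compl_shear_space:
  fixes h :: "real^'n \<Rightarrow> real^'n \<Rightarrow> 'b::real_vector"
  assumes "nondeg_form g" and "bilinear gb" and "\<And>x y. gb x y = gb y x" and "bilinear h"
  shows "umbilical_space g gb h = orth_compl gb (shear_space g h)"
proof (rule set_eqI)
  fix \<xi>
  have lin_gb: "linear (\<lambda>z. gb z \<xi>)"
    using assms(2) by (simp add: bilinear_def)
  have shear_pairing:
    "gb \<xi> (total_shear g h X Y) = gb (h X Y) \<xi> - g X Y * gb (mean_curv g h) \<xi>" for X Y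
    by (simp add: total_shear_def assms(3)[of \<xi>] linear_diff[OF lin_gb] linear_scale[OF lin_gb])
  have "\<xi> \<in> orth_compl gb (shear_space g h) \<longleftrightarrow> (\<forall>X Y. gb \<xi> (total_shear g h X Y) = 0)"
    unfolding shear_space_def orth_compl_span[OF assms(2)] by (auto simp: orth_compl_def)
  also have "\<dots> \<longleftrightarrow> (\<forall>X Y. gb (h X Y) \<xi> = gb (mean_curv g h) \<xi> * g X Y)"
    by (simp add: shear_pairing mult.commute)
  also have "\<dots> \<longleftrightarrow> (\<exists>c. \<forall>X Y. gb (h X Y) \<xi> = c * g X Y)"
    using linear_mean_curv_eq_factor[OF assms(1) lin_gb] by metis
  also have "\<dots> \<longleftrightarrow> \<xi> \<in> umbilical_space g gb h"
    using umbilical_space_iff[OF assms(1,2,4)] by simp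
  finally show "\<xi> \<in> umbilical_space g gb h \<longleftrightarrow> \<xi> \<in> orth_compl gb (shear_space g h)" ..
qed

theorem proposition3p1:
  fixes g :: "real^'n \<Rightarrow> real^'n \<Rightarrow> real"
    and gb :: "real^'k \<Rightarrow> real^'k \<Rightarrow> real"
    and h :: "real^'n \<Rightarrow> real^'n \<Rightarrow> real^'k"
  assumes "pos_def_form g"
    and "nondeg_form gb"
    and "bilinear h"
    and "\<forall>X Y. h X Y = h Y X"
  shows "umbilical_space g gb h = orth_compl gb (shear_space g h)
         \<and> CARD('k) - dim (umbilical_space g gb h) = dim (shear_space g h)"
proof -
  have "bilinear gb" and "\<And>x y. gb x y = gb y x"
    using assms(2) by (simp_all add: nondeg_form_def)
  then have "umbilical_space g gb h = orth_compl gb (shear_space g h)"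
    using umbilical_space_eq_orth_compl_shear_space pos_def_form_imp_nondeg_form assms(1,3)
    by blast
  moreover have "dim (orth_compl gb (shear_space g h)) + dim (shear_space g h) = CARD('k)"
    unfolding shear_space_def by (rule dim_orth_compl[OF assms(2) subspace_span])
  ultimately show ?thesis
    by simp
qed

end
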